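(* Let $T$ be a real with $0<T\le1$. For every $\alpha\in\mathbb{R}$, $\alpha$ is an r.e. $T$-convergent real if and only if there exists a $T$-convergent, computable, increasing sequence of reals which converges to $\alpha$.
   Context: A sequence $\{a_n\}$ is increasing if $a_{n+1}>a_n$ for all $n$. An increasing sequence $\{a_n\}$ of reals is $T$-convergent if $\sum_{n=0}^\infty(a_{n+1}-a_n)^T<\infty$. A real is r.e. if it is the limit of a computable increasing sequence of rationals; an r.e. real $\alpha$ is $T$-convergent if there is a $T$-convergent computable increasing sequence of rationals converging to $\alpha$. A sequence $\{a_n\}$ of reals is computable if there is a total recursive $f:\mathbb{N}\times\mathbb{N}\to\mathbb{Q}$ with $|a_n-f(n,m)|<2^{-m}$ for all $n,m$. *)

theory Defs
  imports Complex_Main "HOL-Library.Nat_Bijection"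
begin

datatype recf = Zer | Suc_f | Proj nat | Comp recf "recf list" | Prec recf recf | Mu recf

inductive evalr :: "recf \<Rightarrow> nat list \<Rightarrow> nat \<Rightarrow> bool" where
  zer: "evalr Zer xs 0"
| suc: "evalr Suc_f (x # xs) (Suc x)"
| proj: "i < length xs \<Longrightarrow> evalr (Proj i) xs (xs ! i)"
| comp: "length ys = length gs \<Longrightarrow> (\<forall>i<length gs. evalr (gs ! i) xs (ys ! i))
          \<Longrightarrow> evalr f ys z \<Longrightarrow> evalr (Comp f gs) xs z"
| prec0: "evalr f xs z \<Longrightarrow> evalr (Prec f g) (0 # xs) z"
| precS: "evalr (Prec f g) (n # xs) y \<Longrightarrow> evalr g (y # n # xs) z
          \<Longrightarrow> evalr (Prec f g) (Suc n # xs) z"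
| mu: "evalr f (n # xs) 0 \<Longrightarrow> (\<forall>m<n. \<exists>k. evalr f (m # xs) (Suc k))
          \<Longrightarrow> evalr (Mu f) xs n"

definition total_recursive :: "(nat \<Rightarrow> nat) \<Rightarrow> bool" where
  "total_recursive h \<longleftrightarrow> (\<exists>r. \<forall>n. evalr r [n] (h n))"

text \<open>Standard coding of rationals by naturals: k codes (a - b)/(c+1) where
k = <a,<b,c>> (Cantor pairing). Every rational has a code.\<close>
definition rat_decode :: "nat \<Rightarrow> rat" where
  "rat_decode k = (case prod_decode k of (a, r) \<Rightarrow>
     (case prod_decode r of (b, c) \<Rightarrow> (of_nat a - of_nat b) / of_nat (c + 1)))"

definition computable_rat_seq :: "(nat \<Rightarrow> rat) \<Rightarrow> bool" where
  "computable_rat_seq q \<longleftrightarrow> (\<exists>h. total_recursive h \<and> (\<forall>n. q n = rat_decode (h n)))"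

definition computable_rat_fun2 :: "(nat \<Rightarrow> nat \<Rightarrow> rat) \<Rightarrow> bool" where
  "computable_rat_fun2 f \<longleftrightarrow>
     (\<exists>h. total_recursive h \<and> (\<forall>n m. f n m = rat_decode (h (prod_encode (n, m)))))"

definition computable_real_seq :: "(nat \<Rightarrow> real) \<Rightarrow> bool" where
  "computable_real_seq a \<longleftrightarrow> (\<exists>f. computable_rat_fun2 f \<and>
     (\<forall>n m. \<bar>a n - real_of_rat (f n m)\<bar> < (1/2) ^ m))"

definition increasing_seq :: "(nat \<Rightarrow> real) \<Rightarrow> bool" where
  "increasing_seq a \<longleftrightarrow> (\<forall>n. a (Suc n) > a n)"

definition T_convergent :: "real \<Rightarrow> (nat \<Rightarrow> real) \<Rightarrow> bool" where
  "T_convergent T a \<longleftrightarrow> increasing_seq a \<and> summable (\<lambda>n. (a (Suc n) - a n) powr T)"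

definition re_real :: "real \<Rightarrow> bool" where
  "re_real \<alpha> \<longleftrightarrow> (\<exists>q. computable_rat_seq q \<and> increasing_seq (\<lambda>n. real_of_rat (q n))
                      \<and> (\<lambda>n. real_of_rat (q n)) \<longlonglongrightarrow> \<alpha>)"

definition re_T_convergent :: "real \<Rightarrow> real \<Rightarrow> bool" where
  "re_T_convergent T \<alpha> \<longleftrightarrow> re_real \<alpha> \<and>
     (\<exists>q. computable_rat_seq q \<and> T_convergent T (\<lambda>n. real_of_rat (q n))
          \<and> (\<lambda>n. real_of_rat (q n)) \<longlonglongrightarrow> \<alpha>)"

end

theory Submission
  imports Defs
begin

(* The forward direction is immediate: a computable increasing T-convergent sequence of
   rationals is a computable sequence of reals (approximate every term by itself).

   For the backward direction let a be a computable, increasing, T-convergent sequence of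
   reals with limit alpha.  For every n, approximating a n and a (n+1) to a precision 2^-m
   fine enough (found by unbounded search) yields a rational q n with a n < q n < a (n+1),
   and n |-> q n is computable.  Since q n - q (n-1) \<le> (a (n+1) - a n) + (a n - a (n-1))
   and x |-> x powr T is subadditive for 0 < T \<le> 1, the sequence q is again T-convergent,
   and it is squeezed to the limit alpha. *)

section \<open>Total recursive functions of fixed arity\<close>

definition rec_fn :: "nat \<Rightarrow> (nat list \<Rightarrow> nat) \<Rightarrow> bool" where
  "rec_fn n g \<longleftrightarrow> (\<exists>r. \<forall>xs. length xs = n \<longrightarrow> evalr r xs (g xs))"

lemma rec_fn_cong:
  assumes "rec_fn n g" and "\<And>xs. length xs = n \<Longrightarrow> g xs = g' xs"
  shows "rec_fn n g'"
proof -
  obtain r where "\<forall>xs. length xs = n \<longrightarrow> evalr r xs (g xs)"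
    using assms(1) rec_fn_def by auto
  then have "\<forall>xs. length xs = n \<longrightarrow> evalr r xs (g' xs)" using assms(2) by simp
  then show ?thesis unfolding rec_fn_def by blast
qed

lemma rec_fn_zero: "rec_fn n (\<lambda>xs. 0)"
  unfolding rec_fn_def by (auto intro: evalr.zer)

lemma rec_fn_proj: "i < n \<Longrightarrow> rec_fn n (\<lambda>xs. xs ! i)"
  unfolding rec_fn_def by (auto intro!: exI[of _ "Proj i"] evalr.proj)

lemma rec_fn_hd: "rec_fn 1 hd"
  by (rule rec_fn_cong[OF rec_fn_proj[of 0 1]]) (auto simp: length_Suc_conv)

lemma rec_fn_comp1:
  assumes "rec_fn 1 f" and "rec_fn n g"
  shows "rec_fn n (\<lambda>xs. f [g xs])"
proof -
  obtain rf where rf: "\<forall>xs. length xs = 1 \<longrightarrow> evalr rf xs (f xs)"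
    using assms(1) rec_fn_def by auto
  obtain rg where rg: "\<forall>xs. length xs = n \<longrightarrow> evalr rg xs (g xs)"
    using assms(2) rec_fn_def by auto
  have "evalr (Comp rf [rg]) xs (f [g xs])" if "length xs = n" for xs
    using that by (intro evalr.comp[of "[g xs]"]) (auto simp: rf rg)
  then show ?thesis unfolding rec_fn_def by blast
qed

lemma rec_fn_comp2:
  assumes "rec_fn 2 f" and "rec_fn n g1" and "rec_fn n g2"
  shows "rec_fn n (\<lambda>xs. f [g1 xs, g2 xs])"
proof -
  obtain rf where rf: "\<forall>xs. length xs = 2 \<longrightarrow> evalr rf xs (f xs)"
    using assms(1) rec_fn_def by auto
  obtain r1 where r1: "\<forall>xs. length xs = n \<longrightarrow> evalr r1 xs (g1 xs)"
    using assms(2) rec_fn_def by auto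
  obtain r2 where r2: "\<forall>xs. length xs = n \<longrightarrow> evalr r2 xs (g2 xs)"
    using assms(3) rec_fn_def by auto
  have "evalr (Comp rf [r1, r2]) xs (f [g1 xs, g2 xs])" if "length xs = n" for xs
    using that by (intro evalr.comp[of "[g1 xs, g2 xs]"]) (auto simp: rf r1 r2 less_Suc_eq)
  then show ?thesis unfolding rec_fn_def by blast
qed

lemma rec_fn_succ:
  assumes "rec_fn n g"
  shows "rec_fn n (\<lambda>xs. Suc (g xs))"
proof -
  have "rec_fn 1 (\<lambda>xs. Suc (hd xs))" unfolding rec_fn_def
    by (rule exI[of _ Suc_f]) (auto simp: length_Suc_conv intro: evalr.suc)
  from rec_fn_comp1[OF this assms] show ?thesis by simp
qed

lemma rec_fn_const: "rec_fn n (\<lambda>xs. c)"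
  by (induct c) (auto intro: rec_fn_zero rec_fn_succ)

lemma rec_fn_prec:
  assumes "rec_fn n f" and "rec_fn m g" and "m = Suc (Suc n)"
    and F0: "\<And>xs. F 0 xs = f xs" and FS: "\<And>k xs. F (Suc k) xs = g (F k xs # k # xs)"
  shows "rec_fn (Suc n) (\<lambda>xs. F (hd xs) (tl xs))"
proof -
  obtain rf where rf: "\<forall>xs. length xs = n \<longrightarrow> evalr rf xs (f xs)"
    using assms(1) rec_fn_def by auto
  obtain rg where rg: "\<forall>xs. length xs = Suc (Suc n) \<longrightarrow> evalr rg xs (g xs)"
    using assms(2,3) rec_fn_def by auto
  have prec: "evalr (Prec rf rg) (k # xs) (F k xs)" if "length xs = n" for k xs
  proof (induct k)
    case 0
    then show ?case using rf that by (simp add: F0 evalr.prec0)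
  next
    case (Suc k)
    then show ?case using rg that by (simp add: FS evalr.precS)
  qed
  show ?thesis unfolding rec_fn_def
    by (rule exI[of _ "Prec rf rg"]) (auto simp: length_Suc_conv intro: prec)
qed

lemma rec_fn_mu:
  assumes "rec_fn m p" and "m = Suc n" and "\<And>xs. length xs = n \<Longrightarrow> \<exists>y. p (y # xs) = 0"
  shows "rec_fn n (\<lambda>xs. LEAST y. p (y # xs) = 0)"
proof -
  obtain r where r: "\<forall>xs. length xs = Suc n \<longrightarrow> evalr r xs (p xs)"
    using assms(1,2) rec_fn_def by auto
  have "evalr (Mu r) xs (LEAST y. p (y # xs) = 0)" if l: "length xs = n" for xs
  proof -
    let ?N = "LEAST y. p (y # xs) = 0"
    have r': "evalr r (y # xs) (p (y # xs))" for y using r l by simp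
    have "p (?N # xs) = 0" using assms(3)[OF l] by (rule LeastI_ex)
    then have zero: "evalr r (?N # xs) 0" using r'[of ?N] by simp
    have "\<exists>k. evalr r (m # xs) (Suc k)" if m: "m < ?N" for m
    proof -
      obtain k where "p (m # xs) = Suc k"
        using not_less_Least[OF m] not0_implies_Suc by blast
      then show ?thesis using r'[of m] by auto
    qed
    with zero show ?thesis by (intro evalr.mu) auto
  qed
  then show ?thesis unfolding rec_fn_def by blast
qed

lemma rec_fn_add:
  assumes "rec_fn n g1" and "rec_fn n g2"
  shows "rec_fn n (\<lambda>xs. g1 xs + g2 xs)"
proof -
  have s: "rec_fn 3 (\<lambda>ys. Suc (ys ! 0))" by (intro rec_fn_succ rec_fn_proj) simp
  have "rec_fn 2 (\<lambda>xs. hd xs + hd (tl xs))"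
    using rec_fn_prec[OF rec_fn_hd s _, where F="\<lambda>k xs. k + hd xs"] by (simp add: numeral_2_eq_2)
  from rec_fn_comp2[OF this assms] show ?thesis by simp
qed

lemma rec_fn_mult:
  assumes "rec_fn n g1" and "rec_fn n g2"
  shows "rec_fn n (\<lambda>xs. g1 xs * g2 xs)"
proof -
  have s: "rec_fn 3 (\<lambda>ys. ys ! 0 + ys ! 2)" by (intro rec_fn_add rec_fn_proj) simp_all
  have "rec_fn 2 (\<lambda>xs. hd xs * (tl xs ! 0))"
    using rec_fn_prec[OF rec_fn_zero s _, where F="\<lambda>k xs. k * (xs ! 0)"]
    by (simp add: add.commute numeral_2_eq_2)
  from rec_fn_comp2[OF this assms] show ?thesis by simp
qed

lemma rec_fn_sub:
  assumes "rec_fn n g1" and "rec_fn n g2"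
  shows "rec_fn n (\<lambda>xs. g1 xs - g2 xs)"
proof -
  have pred: "rec_fn 1 (\<lambda>xs. hd xs - 1)"
    using rec_fn_prec[OF rec_fn_zero[of 0] rec_fn_proj[of 1 2] _, where F="\<lambda>k xs. k - 1"] by simp
  have p: "rec_fn 3 (\<lambda>ys. ys ! 0 - 1)" using rec_fn_comp1[OF pred rec_fn_proj[of 0 3]] by simp
  have "rec_fn 2 (\<lambda>xs. hd (tl xs) - hd xs)"
    using rec_fn_prec[OF rec_fn_hd p _, where F="\<lambda>k xs. hd xs - k"] by (simp add: numeral_2_eq_2)
  from rec_fn_comp2[OF this assms(2,1)] show ?thesis by simp
qed

lemma rec_fn_pow2:
  assumes "rec_fn n g"
  shows "rec_fn n (\<lambda>xs. 2 ^ g xs)"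
proof -
  have s: "rec_fn 2 (\<lambda>ys. ys ! 0 + ys ! 0)" by (intro rec_fn_add rec_fn_proj) simp_all
  have "rec_fn 1 (\<lambda>xs. 2 ^ hd xs)"
    using rec_fn_prec[OF rec_fn_const[of 0 1] s _, where F="\<lambda>k xs. 2 ^ k"] by simp
  from rec_fn_comp1[OF this assms] show ?thesis by simp
qed

lemma rec_fn_total_recursive:
  assumes "total_recursive h" and "rec_fn n g"
  shows "rec_fn n (\<lambda>xs. h (g xs))"
proof -
  obtain r where "\<forall>n. evalr r [n] (h n)" using assms(1) total_recursive_def by auto
  then have "rec_fn 1 (\<lambda>xs. h (hd xs))" unfolding rec_fn_def
    by (intro exI[of _ r]) (auto simp: length_Suc_conv)
  from rec_fn_comp1[OF this assms(2)] show ?thesis by simp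
qed

lemma total_recursive_of_rec_fn:
  assumes "rec_fn 1 (\<lambda>xs. h (hd xs))"
  shows "total_recursive h"
proof -
  obtain r where r: "\<forall>xs. length xs = 1 \<longrightarrow> evalr r xs (h (hd xs))"
    using assms rec_fn_def by auto
  have "evalr r [n] (h n)" for n using r[rule_format, of "[n]"] by simp
  then show ?thesis unfolding total_recursive_def by blast
qed

section \<open>The Cantor pairing is recursive\<close>

lemma rec_fn_triangle:
  assumes "rec_fn n g"
  shows "rec_fn n (\<lambda>xs. triangle (g xs))"
proof -
  have s: "rec_fn 2 (\<lambda>ys. ys ! 0 + Suc (ys ! 1))"
    by (intro rec_fn_add rec_fn_succ rec_fn_proj) simp_all
  have "rec_fn 1 (\<lambda>xs. triangle (hd xs))"
    using rec_fn_prec[OF rec_fn_zero[of 0] s _, where F="\<lambda>k xs. triangle k"] by simp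
  from rec_fn_comp1[OF this assms] show ?thesis by simp
qed

lemma rec_fn_prod_encode:
  "rec_fn n g1 \<Longrightarrow> rec_fn n g2 \<Longrightarrow> rec_fn n (\<lambda>xs. prod_encode (g1 xs, g2 xs))"
  unfolding prod_encode_def by (simp add: rec_fn_add rec_fn_triangle)

text \<open>The diagonal index x + y of the code k of (x, y) is the least s with k < triangle (s+1);
  decoding is then arithmetic in k and this diagonal.\<close>
definition diagonal :: "nat \<Rightarrow> nat" where
  "diagonal k = (LEAST s. Suc k - triangle (Suc s) = 0)"

lemma triangle_mono: "m \<le> n \<Longrightarrow> triangle m \<le> triangle n"
  by (induct n) (auto simp: le_Suc_eq)

lemma prod_decode_via_diagonal:
  "fst (prod_decode k) = k - triangle (diagonal k)"
  "snd (prod_decode k) = diagonal k - fst (prod_decode k)"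
proof -
  obtain x y where p: "prod_decode k = (x, y)" by force
  have k: "k = triangle (x + y) + x"
    using prod_decode_inverse[of k] p by (simp add: prod_encode_def)
  have "diagonal k = x + y" unfolding diagonal_def
  proof (rule Least_equality)
    show "Suc k - triangle (Suc (x + y)) = 0" using k by simp
  next
    fix s assume "Suc k - triangle (Suc s) = 0"
    then have "k < triangle (Suc s)" by simp
    with k show "x + y \<le> s" using triangle_mono[of "Suc s" "x + y"] by linarith
  qed
  then show "fst (prod_decode k) = k - triangle (diagonal k)"
    "snd (prod_decode k) = diagonal k - fst (prod_decode k)" using p k by simp_all
qed

lemma rec_fn_diagonal:
  assumes "rec_fn n g"
  shows "rec_fn n (\<lambda>xs. diagonal (g xs))"
proof -
  have p: "rec_fn 2 (\<lambda>ys. Suc (ys ! 1) - triangle (Suc (ys ! 0)))"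
    by (intro rec_fn_sub rec_fn_succ rec_fn_proj rec_fn_triangle) simp_all
  have "rec_fn 1 (\<lambda>xs. LEAST y. Suc ((y # xs) ! 1) - triangle (Suc ((y # xs) ! 0)) = 0)"
  proof (rule rec_fn_mu[OF p])
    fix xs :: "nat list"
    show "\<exists>y. Suc ((y # xs) ! 1) - triangle (Suc ((y # xs) ! 0)) = 0"
      by (rule exI[of _ "xs ! 0"]) simp
  qed simp
  then have "rec_fn 1 (\<lambda>xs. diagonal (hd xs))"
    by (rule rec_fn_cong) (auto simp: diagonal_def length_Suc_conv)
  from rec_fn_comp1[OF this assms] show ?thesis by simp
qed

lemma rec_fn_fst_decode: "rec_fn n g \<Longrightarrow> rec_fn n (\<lambda>xs. fst (prod_decode (g xs)))"
  unfolding prod_decode_via_diagonal by (intro rec_fn_sub rec_fn_triangle rec_fn_diagonal)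

lemma rec_fn_snd_decode: "rec_fn n g \<Longrightarrow> rec_fn n (\<lambda>xs. snd (prod_decode (g xs)))"
  unfolding prod_decode_via_diagonal(2) by (intro rec_fn_sub rec_fn_diagonal rec_fn_fst_decode)

section \<open>Arithmetic on codes of rationals\<close>

definition code_pos :: "nat \<Rightarrow> nat" where "code_pos k = fst (prod_decode k)"
definition code_neg :: "nat \<Rightarrow> nat" where "code_neg k = fst (prod_decode (snd (prod_decode k)))"
definition code_den :: "nat \<Rightarrow> nat" where "code_den k = snd (prod_decode (snd (prod_decode k)))"

abbreviation code_val :: "nat \<Rightarrow> real" where
  "code_val k \<equiv> real_of_rat (rat_decode k)"

lemma code_val_eq: "code_val k = (real (code_pos k) - real (code_neg k)) / real (code_den k + 1)"
  unfolding rat_decode_def code_pos_def code_neg_def code_den_def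
  by (simp add: case_prod_beta of_rat_divide of_rat_diff of_rat_add)

lemma rec_fn_code_parts:
  assumes "rec_fn n g"
  shows "rec_fn n (\<lambda>xs. code_pos (g xs))" "rec_fn n (\<lambda>xs. code_neg (g xs))"
    "rec_fn n (\<lambda>xs. code_den (g xs))"
  unfolding code_pos_def code_neg_def code_den_def
  by (intro rec_fn_fst_decode rec_fn_snd_decode assms)+

definition shift_code :: "nat \<Rightarrow> nat \<Rightarrow> nat" where
  "shift_code k m = prod_encode (code_pos k * 2 ^ m + (code_den k + 1),
     prod_encode (code_neg k * 2 ^ m, (code_den k + 1) * 2 ^ m - 1))"

lemma code_val_shift_code: "code_val (shift_code k m) = code_val k + (1/2) ^ m"
proof -
  have "(code_den k + 1) * 2 ^ m - 1 + 1 = (code_den k + 1) * (2::nat) ^ m" by simp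
  then show ?thesis
    unfolding shift_code_def code_val_eq[of "prod_encode _"] code_val_eq[of k]
    unfolding code_pos_def code_neg_def code_den_def
    by (simp only: prod_encode_inverse fst_conv snd_conv) (simp add: field_simps)
qed

lemma rec_fn_shift_code:
  "rec_fn n g1 \<Longrightarrow> rec_fn n g2 \<Longrightarrow> rec_fn n (\<lambda>xs. shift_code (g1 xs) (g2 xs))"
  unfolding shift_code_def
  by (intro rec_fn_prod_encode rec_fn_add rec_fn_mult rec_fn_sub rec_fn_pow2 rec_fn_const
      rec_fn_code_parts)

text \<open>The comparison code_val k + 2 * 2^-m < code_val k' after clearing denominators;
  gap_test k k' m is 0 exactly when it holds.\<close>
definition gap_test :: "nat \<Rightarrow> nat \<Rightarrow> nat \<Rightarrow> nat" where
  "gap_test k k' m =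
     Suc (code_pos k * (code_den k' + 1) * 2 ^ m + 2 * (code_den k + 1) * (code_den k' + 1)
          + code_neg k' * (code_den k + 1) * 2 ^ m)
     - (code_pos k' * (code_den k + 1) * 2 ^ m + code_neg k * (code_den k' + 1) * 2 ^ m)"

lemma cross_multiplied_less_iff:
  fixes A B C A' B' C' m :: nat
  shows "A * (C' + 1) * 2 ^ m + 2 * (C + 1) * (C' + 1) + B' * (C + 1) * 2 ^ m
          < A' * (C + 1) * 2 ^ m + B * (C' + 1) * 2 ^ m \<longleftrightarrow>
    (real A - real B) / real (C + 1) + 2 * (1/2) ^ m < (real A' - real B') / real (C' + 1)"
proof -
  define c c' p where "c = real (C + 1)" and "c' = real (C' + 1)" and "p = (2::real) ^ m"
  have pos: "c > 0" "c' > 0" "p > 0" unfolding c_def c'_def p_def by auto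
  have "(real A - real B) / real (C + 1) + 2 * (1/2) ^ m < (real A' - real B') / real (C' + 1)
     \<longleftrightarrow> (real A - real B) / c + 2 / p < (real A' - real B') / c'"
    unfolding c_def c'_def p_def by (simp add: power_one_over)
  also have "\<dots> \<longleftrightarrow> ((real A - real B) / c + 2 / p) * (c * c' * p)
                      < ((real A' - real B') / c') * (c * c' * p)"
    using pos by (intro mult_less_cancel_right_pos[symmetric]) simp
  also have "\<dots> \<longleftrightarrow> real A * c' * p + 2 * c * c' + real B' * c * p < real A' * c * p + real B * c' * p"
  proof -
    have lhs: "((real A - real B) / c + 2 / p) * (c * c' * p) = (real A - real B) * c' * p + 2 * c * c'"
      and rhs: "((real A' - real B') / c') * (c * c' * p) = (real A' - real B') * c * p"
      using pos by (simp_all add: field_simps)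
    show ?thesis unfolding lhs rhs by (simp add: algebra_simps)
  qed
  also have "\<dots> \<longleftrightarrow> real (A * (C' + 1) * 2 ^ m + 2 * (C + 1) * (C' + 1) + B' * (C + 1) * 2 ^ m)
                      < real (A' * (C + 1) * 2 ^ m + B * (C' + 1) * 2 ^ m)"
    unfolding c_def c'_def p_def by (simp add: algebra_simps)
  finally show ?thesis by (simp only: of_nat_less_iff)
qed

lemma gap_test_eq_0_iff: "gap_test k k' m = 0 \<longleftrightarrow> code_val k + 2 * (1/2) ^ m < code_val k'"
proof -
  have "gap_test k k' m = 0 \<longleftrightarrow>
     code_pos k * (code_den k' + 1) * 2 ^ m + 2 * (code_den k + 1) * (code_den k' + 1)
       + code_neg k' * (code_den k + 1) * 2 ^ m
     < code_pos k' * (code_den k + 1) * 2 ^ m + code_neg k * (code_den k' + 1) * 2 ^ m"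
    unfolding gap_test_def by (simp only: diff_is_0_eq Suc_le_eq)
  also have "\<dots> \<longleftrightarrow> code_val k + 2 * (1/2) ^ m < code_val k'"
    unfolding code_val_eq by (rule cross_multiplied_less_iff)
  finally show ?thesis .
qed

lemma rec_fn_gap_test:
  "rec_fn n g1 \<Longrightarrow> rec_fn n g2 \<Longrightarrow> rec_fn n g3 \<Longrightarrow> rec_fn n (\<lambda>xs. gap_test (g1 xs) (g2 xs) (g3 xs))"
  unfolding gap_test_def
  by (intro rec_fn_sub rec_fn_succ rec_fn_add rec_fn_mult rec_fn_pow2 rec_fn_const
      rec_fn_code_parts)

section \<open>Analytic facts\<close>

lemma powr_subadditive:
  fixes x y T :: real
  assumes "0 \<le> x" "0 \<le> y" "0 < T" "T \<le> 1"
  shows "(x + y) powr T \<le> x powr T + y powr T"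
proof (cases "x + y = 0")
  case True
  then show ?thesis using assms by simp
next
  case False
  define s where "s = x + y"
  have s: "s > 0" using False assms s_def by simp
  have frac: "z / s \<le> (z / s) powr T" if "0 \<le> z" "z \<le> s" for z
    using powr_mono'[of T 1 "z/s"] assms s that by (simp add: divide_le_eq_1)
  have "s powr T = s powr T * (x / s + y / s)"
    using s s_def by (simp add: add_divide_distrib[symmetric])
  also have "\<dots> \<le> s powr T * ((x / s) powr T + (y / s) powr T)"
    using frac[of x] frac[of y] assms s_def by (intro mult_left_mono add_mono) auto
  also have "\<dots> = x powr T + y powr T"
    using s assms by (simp add: powr_divide distrib_left)
  finally show ?thesis unfolding s_def .
qed

lemma interleaved_limit:
  fixes a b :: "nat \<Rightarrow> real"
  assumes "a \<longlonglongrightarrow> \<alpha>" and "\<And>n. a n < b n" and "\<And>n. b n < a (Suc n)"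
  shows "b \<longlonglongrightarrow> \<alpha>"
proof (rule tendsto_sandwich[OF _ _ assms(1) LIMSEQ_Suc[OF assms(1)]])
  show "\<forall>\<^sub>F n in sequentially. a n \<le> b n" using assms(2) by (simp add: less_imp_le)
  show "\<forall>\<^sub>F n in sequentially. b n \<le> a (Suc n)" using assms(3) by (simp add: less_imp_le)
qed

text \<open>... and it inherits T-convergence: each gap of b is covered by two gaps of a.\<close>
lemma interleaved_T_convergent:
  fixes a b :: "nat \<Rightarrow> real"
  assumes T: "0 < T" "T \<le> 1" and a: "T_convergent T a"
    and lo: "\<And>n. a n < b n" and hi: "\<And>n. b n < a (Suc n)"
  shows "T_convergent T b"
proof -
  define d where "d n = a (Suc n) - a n" for n
  have d_pos: "d n \<ge> 0" for n using lo[of n] hi[of n] unfolding d_def by simp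
  have b_inc: "increasing_seq b"
    unfolding increasing_seq_def using lo hi by (meson less_trans)
  have "summable (\<lambda>n. d n powr T)" using a unfolding T_convergent_def d_def by simp
  then have sd: "summable (\<lambda>n. d (Suc n) powr T + d n powr T)"
    using summable_Suc_iff[of "\<lambda>n. d n powr T"] by (intro summable_add) auto
  have "summable (\<lambda>n. (b (Suc n) - b n) powr T)"
  proof (rule summable_comparison_test'[OF sd])
    fix n :: nat
    have pos: "b (Suc n) - b n \<ge> 0" using b_inc unfolding increasing_seq_def by (simp add: less_imp_le)
    have le: "b (Suc n) - b n \<le> d (Suc n) + d n" using lo[of n] hi[of "Suc n"] unfolding d_def by simp
    have "norm ((b (Suc n) - b n) powr T) = (b (Suc n) - b n) powr T" by simp
    also have "\<dots> \<le> (d (Suc n) + d n) powr T" using powr_mono2[OF _ pos le] T by simp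
    also have "\<dots> \<le> d (Suc n) powr T + d n powr T" using powr_subadditive d_pos T by blast
    finally show "norm ((b (Suc n) - b n) powr T) \<le> d (Suc n) powr T + d n powr T" .
  qed
  with b_inc show ?thesis unfolding T_convergent_def by simp
qed

lemma approximations_separate:
  fixes x y :: real
  assumes "x < y" and "\<And>m. \<bar>x - p m\<bar> < (1/2) ^ m" and "\<And>m. \<bar>y - r m\<bar> < (1/2) ^ m"
  shows "\<exists>m. p m + 2 * (1/2) ^ m < r m"
proof -
  obtain m where m: "(1/2::real) ^ m < (y - x) / 4"
    using real_arch_pow_inv[of "(y - x) / 4" "1/2"] assms(1) by auto
  define h where "h = (1/2::real) ^ m"
  have "p m + 2 * h < r m"
    using m assms(2,3)[of m] unfolding abs_less_iff h_def[symmetric] by argo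
  then show ?thesis unfolding h_def by blast
qed

lemma separated_approximation_between:
  fixes x y p r h :: real
  assumes "\<bar>x - p\<bar> < h" and "\<bar>y - r\<bar> < h" and "p + 2 * h < r"
  shows "x < p + h" and "p + h < y"
  using assms unfolding abs_less_iff by linarith+

text \<open>Between consecutive terms of a computable increasing sequence of reals one can
  computably choose rationals: search for the first precision at which the approximations
  of a n and a (n+1) are separated, and shift the lower one up by that precision.\<close>
lemma computable_rats_between:
  assumes "computable_real_seq a" and inc: "increasing_seq a"
  shows "\<exists>q. computable_rat_seq q \<and> (\<forall>n. a n < real_of_rat (q n) \<and> real_of_rat (q n) < a (Suc n))"
proof -
  obtain H where H: "total_recursive H"
    and approx: "\<And>n m. \<bar>a n - code_val (H (prod_encode (n, m)))\<bar> < (1/2) ^ m"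
    using assms(1) unfolding computable_real_seq_def computable_rat_fun2_def by force
  define u where "u n m = H (prod_encode (n, m))" for n m
  define prec where "prec n = (LEAST m. gap_test (u n m) (u (Suc n) m) m = 0)" for n
  define code where "code n = shift_code (u n (prec n)) (prec n)" for n
  have prec_ex: "\<exists>m. gap_test (u n m) (u (Suc n) m) m = 0" for n
    unfolding gap_test_eq_0_iff
    by (rule approximations_separate[of "a n" "a (Suc n)"])
      (use inc approx in \<open>auto simp: u_def increasing_seq_def\<close>)
  have between: "a n < code_val (code n) \<and> code_val (code n) < a (Suc n)" for n
    using separated_approximation_between[OF approx approx, of n "prec n" "Suc n"]
      LeastI_ex[OF prec_ex[of n]]
    unfolding code_def code_val_shift_code gap_test_eq_0_iff prec_def u_def by blast
  define test where "test ys = gap_test (u (ys!1) (ys!0)) (u (Suc (ys!1)) (ys!0)) (ys!0)" for ys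
  have "rec_fn 2 test"
    unfolding test_def u_def
    by (intro rec_fn_gap_test rec_fn_total_recursive[OF H] rec_fn_prod_encode rec_fn_succ
        rec_fn_proj) simp_all
  then have "rec_fn 1 (\<lambda>xs. LEAST m. test (m # xs) = 0)"
    by (rule rec_fn_mu) (auto simp: test_def prec_ex)
  then have "rec_fn 1 (\<lambda>xs. prec (hd xs))"
    by (rule rec_fn_cong) (auto simp: test_def prec_def length_Suc_conv)
  then have "rec_fn 1 (\<lambda>xs. code (hd xs))"
    unfolding code_def u_def
    by (intro rec_fn_shift_code rec_fn_total_recursive[OF H] rec_fn_prod_encode rec_fn_hd)
  then have "computable_rat_seq (\<lambda>n. rat_decode (code n))"
    unfolding computable_rat_seq_def using total_recursive_of_rec_fn by blast
  with between show ?thesis by blast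
qed

lemma computable_real_seq_of_rat:
  assumes "computable_rat_seq q"
  shows "computable_real_seq (\<lambda>n. real_of_rat (q n))"
proof -
  obtain h where h: "total_recursive h" "\<And>n. q n = rat_decode (h n)"
    using assms computable_rat_seq_def by auto
  have "rec_fn 1 (\<lambda>xs. h (fst (prod_decode (hd xs))))"
    by (intro rec_fn_total_recursive[OF h(1)] rec_fn_fst_decode rec_fn_hd)
  then have "total_recursive (\<lambda>k. h (fst (prod_decode k)))" by (rule total_recursive_of_rec_fn)
  then have "computable_rat_fun2 (\<lambda>n m. q n)"
    unfolding computable_rat_fun2_def using h(2) by auto
  then show ?thesis unfolding computable_real_seq_def by (intro exI[of _ "\<lambda>n m. q n"]) simp
qed

lemma re_T_convergent_of_computable_real_seq:
  assumes T: "0 < T" "T \<le> 1" and a: "T_convergent T a" "computable_real_seq a"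
    and lim: "a \<longlonglongrightarrow> \<alpha>"
  shows "re_T_convergent T \<alpha>"
proof -
  have "increasing_seq a" using a(1) unfolding T_convergent_def by simp
  then obtain q where q: "computable_rat_seq q"
    and lo: "\<And>n. a n < real_of_rat (q n)" and hi: "\<And>n. real_of_rat (q n) < a (Suc n)"
    using computable_rats_between[OF a(2)] by blast
  have "T_convergent T (\<lambda>n. real_of_rat (q n))"
    using interleaved_T_convergent[OF T a(1) lo hi] .
  moreover have "(\<lambda>n. real_of_rat (q n)) \<longlonglongrightarrow> \<alpha>"
    using interleaved_limit[OF lim lo hi] .
  ultimately show ?thesis
    using q unfolding re_T_convergent_def re_real_def T_convergent_def by blast
qed

theorem mainTheorem2:
  fixes T \<alpha> :: real
  assumes "0 < T" and "T \<le> 1"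
  shows "re_T_convergent T \<alpha> \<longleftrightarrow>
    (\<exists>a. T_convergent T a \<and> computable_real_seq a \<and> increasing_seq a \<and> a \<longlonglongrightarrow> \<alpha>)"
proof
  assume "re_T_convergent T \<alpha>"
  then obtain q where "computable_rat_seq q" "T_convergent T (\<lambda>n. real_of_rat (q n))"
    "(\<lambda>n. real_of_rat (q n)) \<longlonglongrightarrow> \<alpha>"
    unfolding re_T_convergent_def by blast
  then show "\<exists>a. T_convergent T a \<and> computable_real_seq a \<and> increasing_seq a \<and> a \<longlonglongrightarrow> \<alpha>"
    using computable_real_seq_of_rat unfolding T_convergent_def by blast
next
  assume "\<exists>a. T_convergent T a \<and> computable_real_seq a \<and> increasing_seq a \<and> a \<longlonglongrightarrow> \<alpha>"
  then show "re_T_convergent T \<alpha>"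
    using re_T_convergent_of_computable_real_seq assms by blast
qed

end
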